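(* If $A$ is a doubly nonnegative matrix with at most three distinct eigenvalues, then $A^t$ is doubly nonnegative for all $t\ge 1$.
   Context: A real matrix is doubly nonnegative if it is symmetric, positive semidefinite, and entry-wise nonnegative. For positive semidefinite $A=\sum_i\lambda_ix_ix_i^T$ (orthonormal eigenvectors, $\lambda_i\ge 0$) and $t>0$, $A^t=\sum_i\lambda_i^tx_ix_i^T$. *)

theory Defs
  imports "HOL-Analysis.Analysis"
begin

definition symmetric_mat :: "real^'n^'n \<Rightarrow> bool" where
  "symmetric_mat A \<longleftrightarrow> transpose A = A"

definition psd_mat :: "real^'n^'n \<Rightarrow> bool" where
  "psd_mat A \<longleftrightarrow> symmetric_mat A \<and> (\<forall>x. 0 \<le> x \<bullet> (A *v x))"

definition nonneg_mat :: "real^'n^'n \<Rightarrow> bool" where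
  "nonneg_mat A \<longleftrightarrow> (\<forall>i j. 0 \<le> A $ i $ j)"

definition doubly_nonnegative :: "real^'n^'n \<Rightarrow> bool" where
  "doubly_nonnegative A \<longleftrightarrow> symmetric_mat A \<and> psd_mat A \<and> nonneg_mat A"

definition eigenvalues_of :: "real^'n^'n \<Rightarrow> real set" where
  "eigenvalues_of A = {l. \<exists>v. v \<noteq> 0 \<and> A *v v = l *\<^sub>R v}"

definition outer_prod :: "real^'n \<Rightarrow> real^'n \<Rightarrow> real^'n^'n" where
  "outer_prod u v = (\<chi> a b. u $ a * v $ b)"

text \<open>A = sum_i lam_i x_i x_i^T with (x_i) an orthonormal family of eigenvectors
  (indexed by 'n, hence a basis) and lam_i \<ge> 0.\<close>
definition psd_eigendecomp :: "real^'n^'n \<Rightarrow> ('n \<Rightarrow> real) \<Rightarrow> ('n \<Rightarrow> real^'n) \<Rightarrow> bool" where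
  "psd_eigendecomp A lam x \<longleftrightarrow>
     (\<forall>i j. x i \<bullet> x j = (if i = j then 1 else 0)) \<and>
     (\<forall>i. 0 \<le> lam i) \<and>
     A = (\<Sum>i\<in>UNIV. lam i *\<^sub>R outer_prod (x i) (x i))"

text \<open>A^t = sum_i lam_i^t x_i x_i^T (independent of the chosen decomposition).\<close>
definition mat_rpow :: "real^'n^'n \<Rightarrow> real \<Rightarrow> real^'n^'n" where
  "mat_rpow A t = (SOME B. \<exists>lam x. psd_eigendecomp A lam x \<and>
       B = (\<Sum>i\<in>UNIV. (lam i powr t) *\<^sub>R outer_prod (x i) (x i)))"

end

theory Submission
  imports Defs
begin

text \<open>Write \<open>t = k + s\<close> with \<open>k \<in> \<nat>\<close> and \<open>1 \<le> s \<le> 2\<close>, so that \<open>A\<^sup>t = A\<^sup>k A\<^sup>s\<close> and it suffices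
  that \<open>A\<^sup>s\<close> is entrywise nonnegative. On at most three nonnegative points, \<open>\<lambda>\<^sup>s\<close> coincides
  with a quadratic \<open>g + \<beta> \<lambda> + \<delta> \<lambda>\<^sup>2\<close>, where \<open>\<delta> \<ge> 0\<close> by convexity of \<open>\<lambda>\<^sup>s\<close> and \<open>\<beta> \<ge> 0\<close> by
  concavity of \<open>\<mu>\<^sup>s\<^sup>/\<^sup>2\<close> in \<open>\<mu> = \<lambda>\<^sup>2\<close>. Hence \<open>A\<^sup>s = g I + \<beta> A + \<delta> A\<^sup>2\<close>, which is nonnegative off
  the diagonal, and its diagonal is nonnegative because \<open>A\<^sup>s\<close> is positive semidefinite.\<close>

section \<open>Quadratic interpolation of powers on three points\<close>

lemma quadratic_interpolation_nonneg_coeffs: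
  fixes f :: "real \<Rightarrow> real"
  assumes "a < b" "b < c"
    and convex: "f b * (c - a) \<le> f a * (c - b) + f c * (b - a)"
    and concave_sq: "f a * (c\<^sup>2 - b\<^sup>2) + f c * (b\<^sup>2 - a\<^sup>2) \<le> f b * (c\<^sup>2 - a\<^sup>2)"
  shows "\<exists>g \<beta> \<delta>. 0 \<le> \<beta> \<and> 0 \<le> \<delta> \<and> (\<forall>e\<in>{a, b, c}. f e = g + \<beta> * e + \<delta> * e\<^sup>2)"
proof -
  define D where "D = (b - a) * (c - b) * (c - a)"
  define \<delta> where "\<delta> = (f a * (c - b) - f b * (c - a) + f c * (b - a)) / D"
  define \<beta> where "\<beta> = (f b * (c\<^sup>2 - a\<^sup>2) - f a * (c\<^sup>2 - b\<^sup>2) - f c * (b\<^sup>2 - a\<^sup>2)) / D"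
  define g where "g = f a - \<beta> * a - \<delta> * a\<^sup>2"
  have D: "D > 0" using assms(1,2) by (simp add: D_def)
  have "0 \<le> \<beta>" "0 \<le> \<delta>" using D convex concave_sq by (simp_all add: \<beta>_def \<delta>_def)
  moreover have "f e = g + \<beta> * e + \<delta> * e\<^sup>2" if "e \<in> {b, c}" for e
  proof -
    have "(g + \<beta> * e + \<delta> * e\<^sup>2) * D = f a * D + (e - a) * (\<beta> * D + \<delta> * D * (a + e))"
      by (simp add: g_def algebra_simps power2_eq_square)
    also have "\<dots> = f e * D"
      using D that by (auto simp: \<beta>_def \<delta>_def) (auto simp: D_def algebra_simps power2_eq_square)
    finally show ?thesis using D by simp
  qed
  ultimately show ?thesis by (intro exI[of _ g] exI[of _ \<beta>] exI[of _ \<delta>]) (auto simp: g_def)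
qed

lemma convex_on_chord:
  fixes f :: "real \<Rightarrow> real"
  assumes "convex_on {a..c} f" "a < b" "b < c"
  shows "f b * (c - a) \<le> f a * (c - b) + f c * (b - a)"
proof -
  have "f b \<le> (f c - f a) / (c - a) * (b - a) + f a"
    using convex_onD_Icc'[OF assms(1)] assms(2,3) by simp
  hence "f b * (c - a) \<le> ((f c - f a) / (c - a) * (b - a) + f a) * (c - a)"
    using assms(2,3) by (intro mult_right_mono) auto
  also have "\<dots> = (f c - f a) * (b - a) + f a * (c - a)"
    using assms(2,3) by (simp add: field_simps)
  finally show ?thesis by (simp add: algebra_simps)
qed

lemma concave_on_chord:
  fixes f :: "real \<Rightarrow> real"
  assumes "concave_on {a..c} f" "a < b" "b < c"
  shows "f a * (c - b) + f c * (b - a) \<le> f b * (c - a)"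
  using convex_on_chord[of a c "\<lambda>x. - f x" b] assms by (simp add: concave_on_def algebra_simps)

lemma powr_concave: "0 < p \<Longrightarrow> p \<le> 1 \<Longrightarrow> concave_on {0<..} (\<lambda>x::real. x powr p)"
  by (intro f''_le0_imp_concave derivative_eq_intros | simp add: mult_nonpos_nonneg)+

text \<open>The library states convexity (concavity) of powers only on \<open>{0<..}\<close>; a chord starting at
  \<open>0\<close> reduces to monotonicity of \<open>x powr (p - 1)\<close>.\<close>

lemma powr_chord_convex:
  fixes a b c p :: real
  assumes "0 \<le> a" "a < b" "b < c" "1 \<le> p"
  shows "b powr p * (c - a) \<le> a powr p * (c - b) + c powr p * (b - a)"
proof (cases "a = 0")
  case True
  have "b * c * b powr (p - 1) \<le> b * c * c powr (p - 1)"
    using assms by (intro mult_left_mono powr_mono2) auto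
  moreover have "b powr p = b * b powr (p - 1)" "c powr p = c * c powr (p - 1)"
    using assms by (simp_all add: powr_mult_base)
  ultimately show ?thesis using True by (simp add: mult_ac)
next
  case False
  have "convex_on {a..c} (\<lambda>x. x powr p)"
    using powr_convex[OF assms(4)] by (rule convex_on_subset) (use assms False in auto)
  thus ?thesis using convex_on_chord assms by blast
qed

lemma powr_chord_concave:
  fixes a b c p :: real
  assumes "0 \<le> a" "a < b" "b < c" "0 < p" "p \<le> 1"
  shows "a powr p * (c - b) + c powr p * (b - a) \<le> b powr p * (c - a)"
proof (cases "a = 0")
  case True
  have "b * c * c powr (p - 1) \<le> b * c * b powr (p - 1)"
    using assms by (intro mult_left_mono powr_mono2') auto
  moreover have "b powr p = b * b powr (p - 1)" "c powr p = c * c powr (p - 1)"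
    using assms by (simp_all add: powr_mult_base)
  ultimately show ?thesis using True by (simp add: mult_ac)
next
  case False
  have "concave_on {a..c} (\<lambda>x. x powr p)"
    using powr_concave[OF assms(4,5)] unfolding concave_on_def
    by (rule convex_on_subset) (use assms False in auto)
  thus ?thesis using concave_on_chord assms by blast
qed

lemma powr_quadratic_interpolation:
  fixes a b c s :: real
  assumes "0 \<le> a" "a < b" "b < c" "1 \<le> s" "s \<le> 2"
  shows "\<exists>g \<beta> \<delta>. 0 \<le> \<beta> \<and> 0 \<le> \<delta> \<and> (\<forall>e\<in>{a, b, c}. e powr s = g + \<beta> * e + \<delta> * e\<^sup>2)"
proof (rule quadratic_interpolation_nonneg_coeffs[OF assms(2,3)])
  show "b powr s * (c - a) \<le> a powr s * (c - b) + c powr s * (b - a)"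
    using powr_chord_convex assms by blast
  have sq: "(x\<^sup>2) powr (s / 2) = x powr s" if "0 \<le> x" for x :: real
    using that by (simp add: power2_eq_square powr_mult flip: powr_add)
  have "(a\<^sup>2) powr (s / 2) * (c\<^sup>2 - b\<^sup>2) + (c\<^sup>2) powr (s / 2) * (b\<^sup>2 - a\<^sup>2) \<le> (b\<^sup>2) powr (s / 2) * (c\<^sup>2 - a\<^sup>2)"
    using assms by (intro powr_chord_concave power_strict_mono) auto
  thus "a powr s * (c\<^sup>2 - b\<^sup>2) + c powr s * (b\<^sup>2 - a\<^sup>2) \<le> b powr s * (c\<^sup>2 - a\<^sup>2)"
    using assms by (simp add: sq)
qed

lemma subset_nonneg_triple:
  fixes E :: "real set"
  assumes "finite E" "card E \<le> 3" "E \<subseteq> {0..}"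
  shows "\<exists>a b c. 0 \<le> a \<and> a < b \<and> b < c \<and> E \<subseteq> {a, b, c}"
proof -
  obtain xs where xs: "sorted_wrt (<) xs" "set xs = E" "length xs \<le> 3"
    using finite_set_strict_sorted[OF assms(1)] assms(2) by metis
  consider "xs = []" | p where "xs = [p]" | p q where "xs = [p, q]" | p q r where "xs = [p, q, r]"
    using xs(3) by (cases xs; cases "tl xs"; cases "tl (tl xs)"; cases "tl (tl (tl xs))") auto
  then show ?thesis
  proof cases
    case 1
    thus ?thesis using xs by (intro exI[of _ 0] exI[of _ 1] exI[of _ 2]) auto
  next
    case (2 p)
    hence "0 \<le> p" using xs(2) assms(3) by auto
    thus ?thesis using 2 xs by (intro exI[of _ p] exI[of _ "p + 1"] exI[of _ "p + 2"]) auto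
  next
    case (3 p q)
    hence "0 \<le> p" using xs(2) assms(3) by auto
    thus ?thesis using 3 xs by (intro exI[of _ p] exI[of _ q] exI[of _ "q + 1"]) auto
  next
    case (4 p q r)
    hence "0 \<le> p" using xs(2) assms(3) by auto
    thus ?thesis using 4 xs by (intro exI[of _ p] exI[of _ q] exI[of _ r]) auto
  qed
qed

lemma powr_quadratic_interpolation_card_le_3:
  fixes E :: "real set"
  assumes "finite E" "card E \<le> 3" "E \<subseteq> {0..}" "1 \<le> s" "s \<le> 2"
  shows "\<exists>g \<beta> \<delta>. 0 \<le> \<beta> \<and> 0 \<le> \<delta> \<and> (\<forall>e\<in>E. e powr s = g + \<beta> * e + \<delta> * e\<^sup>2)"
proof -
  obtain a b c where abc: "0 \<le> a" "a < b" "b < c" "E \<subseteq> {a, b, c}"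
    using subset_nonneg_triple[OF assms(1-3)] by blast
  show ?thesis
    using powr_quadratic_interpolation[OF abc(1-3) assms(4,5)] abc(4) by blast
qed

section \<open>Spectral calculus for an orthonormal eigenbasis\<close>

definition orthonormal_fam :: "('n \<Rightarrow> real^'n) \<Rightarrow> bool" where
  "orthonormal_fam x \<longleftrightarrow> (\<forall>i j. x i \<bullet> x j = (if i = j then 1 else 0))"

text \<open>\<open>spectral_mat x f\<close> is \<open>f\<close> applied to the spectrum of any matrix with orthonormal
  eigenbasis \<open>x\<close>.\<close>

definition spectral_mat :: "('n \<Rightarrow> real^'n) \<Rightarrow> ('n \<Rightarrow> real) \<Rightarrow> real^'n^'n" where
  "spectral_mat x f = (\<Sum>i\<in>UNIV. f i *\<^sub>R outer_prod (x i) (x i))"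

lemma psd_eigendecomp_iff:
  "psd_eigendecomp A lam x \<longleftrightarrow> orthonormal_fam x \<and> (\<forall>i. 0 \<le> lam i) \<and> A = spectral_mat x lam"
  by (auto simp: psd_eigendecomp_def orthonormal_fam_def spectral_mat_def)

lemma orthonormal_famD: "orthonormal_fam x \<Longrightarrow> x i \<bullet> x j = (if i = j then 1 else 0)"
  by (simp add: orthonormal_fam_def)

lemma orthonormal_fam_inner_sum:
  assumes "orthonormal_fam x"
  shows "x j \<bullet> (\<Sum>i\<in>UNIV. c i *\<^sub>R x i) = c j"
  by (simp add: inner_sum_right orthonormal_famD[OF assms] if_distrib cong: if_cong)

lemma orthonormal_fam_expansion:
  fixes x :: "'n \<Rightarrow> real^'n"
  assumes "orthonormal_fam x"
  shows "v = (\<Sum>i\<in>UNIV. (x i \<bullet> v) *\<^sub>R x i)"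
proof -
  have inj: "inj x"
    by (rule injI) (metis assms orthonormal_famD zero_neq_one)
  have "pairwise orthogonal (range x)"
    using assms by (auto simp: pairwise_def orthogonal_def orthonormal_famD)
  moreover have "0 \<notin> range x"
    by (metis assms imageE inner_zero_left orthonormal_famD zero_neq_one)
  ultimately have "independent (range x)"
    by (rule pairwise_orthogonal_independent)
  moreover have "card (range x) = dim (UNIV :: (real^'n) set)"
    using inj by (simp add: card_image)
  ultimately have "v \<in> span (range x)"
    using card_eq_dim[of "range x" UNIV] finiteI_independent by auto
  then obtain u where "v = (\<Sum>w\<in>range x. u w *\<^sub>R w)"
    using span_finite[of "range x"] by auto
  also have "\<dots> = (\<Sum>i\<in>UNIV. u (x i) *\<^sub>R x i)"
    using inj by (simp add: sum.reindex)
  finally have v: "v = (\<Sum>i\<in>UNIV. u (x i) *\<^sub>R x i)" .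
  hence "x j \<bullet> v = u (x j)" for j
    using orthonormal_fam_inner_sum[OF assms] by metis
  thus ?thesis using v by simp
qed

lemma spectral_mat_entry: "spectral_mat x f $ a $ b = (\<Sum>i\<in>UNIV. f i * (x i $ a * x i $ b))"
  by (simp add: spectral_mat_def outer_prod_def)

lemma spectral_mat_mult_vec:
  fixes x :: "'n \<Rightarrow> real^'n"
  shows "spectral_mat x f *v v = (\<Sum>i\<in>UNIV. (f i * (x i \<bullet> v)) *\<^sub>R x i)"
proof -
  have sum_mult_vec: "(\<Sum>i\<in>I. M i) *v v = (\<Sum>i\<in>I. M i *v v)" for I and M :: "'a \<Rightarrow> real^'n^'n"
    by (induct I rule: infinite_finite_induct) (simp_all add: matrix_vector_mult_add_rdistrib)
  have "outer_prod u u *v v = (u \<bullet> v) *\<^sub>R u" for u :: "real^'n"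
    by (simp add: vec_eq_iff outer_prod_def matrix_vector_mult_def inner_vec_def sum_distrib_left mult_ac)
  thus ?thesis
    by (simp add: spectral_mat_def sum_mult_vec scaleR_matrix_vector_assoc[symmetric])
qed

lemma spectral_mat_eigenvector:
  assumes "orthonormal_fam x"
  shows "spectral_mat x f *v x j = f j *\<^sub>R x j"
proof -
  have "(f i * (x i \<bullet> x j)) *\<^sub>R x i = (if i = j then f j *\<^sub>R x j else 0)" for i
    by (simp add: orthonormal_famD[OF assms])
  thus ?thesis by (simp add: spectral_mat_mult_vec)
qed

lemma spectral_mat_one:
  assumes "orthonormal_fam x"
  shows "spectral_mat x (\<lambda>_. 1) = mat 1"
  unfolding matrix_eq by (simp add: spectral_mat_mult_vec orthonormal_fam_expansion[OF assms, symmetric])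

lemma spectral_mat_mult:
  assumes "orthonormal_fam x"
  shows "spectral_mat x f ** spectral_mat x g = spectral_mat x (\<lambda>i. f i * g i)"
  unfolding matrix_eq
  by (simp add: matrix_vector_mul_assoc[symmetric] spectral_mat_mult_vec
      orthonormal_fam_inner_sum[OF assms] mult_ac)

lemma spectral_mat_affine:
  "spectral_mat x (\<lambda>i. a + b * f i + c * g i) =
     a *\<^sub>R spectral_mat x (\<lambda>_. 1) + b *\<^sub>R spectral_mat x f + c *\<^sub>R spectral_mat x g"
  by (simp add: spectral_mat_def scaleR_add_left sum.distrib scaleR_sum_right)

lemma psd_spectral_mat:
  assumes "\<And>i. 0 \<le> f i"
  shows "psd_mat (spectral_mat x f)"
proof -
  have "symmetric_mat (spectral_mat x f)"
    by (simp add: symmetric_mat_def vec_eq_iff transpose_def spectral_mat_entry mult.commute)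
  moreover have "0 \<le> v \<bullet> (spectral_mat x f *v v)" for v
    using assms by (auto simp: spectral_mat_mult_vec inner_sum_right inner_commute mult.assoc
        intro!: sum_nonneg)
  ultimately show ?thesis by (simp add: psd_mat_def)
qed

lemma eigenvalues_of_spectral_mat:
  assumes "orthonormal_fam x"
  shows "eigenvalues_of (spectral_mat x f) = range f"
proof
  show "range f \<subseteq> eigenvalues_of (spectral_mat x f)"
  proof
    fix l assume "l \<in> range f"
    then obtain j where "l = f j" by blast
    moreover have "x j \<noteq> 0" using orthonormal_famD[OF assms, of j j] by auto
    ultimately show "l \<in> eigenvalues_of (spectral_mat x f)"
      using spectral_mat_eigenvector[OF assms] by (auto simp: eigenvalues_of_def)
  qed
  show "eigenvalues_of (spectral_mat x f) \<subseteq> range f"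
  proof
    fix l assume "l \<in> eigenvalues_of (spectral_mat x f)"
    then obtain v where v: "v \<noteq> 0" "spectral_mat x f *v v = l *\<^sub>R v"
      by (auto simp: eigenvalues_of_def)
    have "l * (x j \<bullet> v) = f j * (x j \<bullet> v)" for j
      using arg_cong[OF v(2), of "\<lambda>w. x j \<bullet> w"]
      by (auto simp: spectral_mat_mult_vec orthonormal_fam_inner_sum[OF assms])
    moreover obtain j where "x j \<bullet> v \<noteq> 0"
      using v(1) orthonormal_fam_expansion[OF assms, of v] by force
    ultimately show "l \<in> range f" by auto
  qed
qed

section \<open>The spectral theorem for real symmetric matrices\<close>

lemma symmetric_inner_mult_vec:
  fixes A :: "real^'n^'n"
  assumes "transpose A = A"
  shows "x \<bullet> (A *v y) = (A *v x) \<bullet> y"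
  by (metis assms dot_lmul_matrix transpose_matrix_vector)

lemma quadratic_nonneg_imp_linear_coeff_zero:
  fixes p q :: real
  assumes "0 \<le> q" "\<And>e. 0 \<le> 2 * e * p + e\<^sup>2 * q"
  shows "p = 0"
proof (rule ccontr)
  assume "p \<noteq> 0"
  define e where "e = - p / (q + 1)"
  have "2 * e * p + e\<^sup>2 * q = p\<^sup>2 * (- q - 2) / (q + 1)\<^sup>2"
    using assms(1) by (simp add: e_def divide_simps power2_eq_square) (simp add: algebra_simps)
  also have "\<dots> < 0"
    using \<open>p \<noteq> 0\<close> assms(1) by (intro divide_neg_pos mult_pos_neg) auto
  finally show False using assms(2)[of e] by simp
qed

lemma quadratic_form_attains_max:
  fixes A :: "real^'n^'n"
  assumes "subspace S" "u \<in> S" "u \<noteq> 0"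
  shows "\<exists>v\<in>S. norm v = 1 \<and> (\<forall>w\<in>S. w \<bullet> (A *v w) \<le> (v \<bullet> (A *v v)) * (w \<bullet> w))"
proof -
  define K where "K = S \<inter> sphere 0 1"
  have "compact K"
    unfolding K_def using compact_Int_closed[OF compact_sphere closed_subspace[OF assms(1)]]
    by (simp add: Int_commute)
  moreover have "(1 / norm u) *\<^sub>R u \<in> K"
    using assms by (simp add: K_def subspace_scale)
  moreover have "continuous_on K (\<lambda>v. v \<bullet> (A *v v))"
    by (intro continuous_on_inner continuous_on_id matrix_vector_mult_linear_continuous_on)
  ultimately obtain v where v: "v \<in> K" and max: "\<And>w. w \<in> K \<Longrightarrow> w \<bullet> (A *v w) \<le> v \<bullet> (A *v v)"
    using continuous_attains_sup[of K "\<lambda>v. v \<bullet> (A *v v)"] by blast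
  have "w \<bullet> (A *v w) \<le> (v \<bullet> (A *v v)) * (w \<bullet> w)" if "w \<in> S" for w
  proof (cases "w = 0")
    case False
    have "(1 / norm w) *\<^sub>R w \<in> K" using that False assms(1) by (simp add: K_def subspace_scale)
    from max[OF this] have "(w \<bullet> (A *v w)) / (norm w)\<^sup>2 \<le> v \<bullet> (A *v v)"
      by (simp add: matrix_vector_mult_scaleR power2_eq_square)
    thus ?thesis using False by (simp add: divide_le_eq power2_norm_eq_inner)
  qed simp
  thus ?thesis using v by (auto simp: K_def)
qed

text \<open>A maximiser \<open>v\<close> of the Rayleigh quotient on an invariant subspace is an eigenvector:
  \<open>u = m v - A v\<close> lies in the subspace, and perturbing \<open>v\<close> in direction \<open>u\<close> shows \<open>u \<bullet> u = 0\<close>.\<close>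

lemma quadratic_form_max_eigenvector:
  fixes A :: "real^'n^'n"
  assumes sym: "transpose A = A" and S: "subspace S" "\<forall>w\<in>S. A *v w \<in> S" "v \<in> S"
    and max: "\<forall>w\<in>S. w \<bullet> (A *v w) \<le> m * (w \<bullet> w)" and attained: "v \<bullet> (A *v v) = m * (v \<bullet> v)"
  shows "A *v v = m *\<^sub>R v"
proof -
  define u where "u = m *\<^sub>R v - A *v v"
  have u: "u \<in> S" using S by (simp add: u_def subspace_diff subspace_scale)
  have perturb: "0 \<le> 2 * e * (u \<bullet> u) + e\<^sup>2 * (m * (u \<bullet> u) - u \<bullet> (A *v u))" for e
  proof -
    have "v + e *\<^sub>R u \<in> S" using S u by (simp add: subspace_add subspace_scale)
    hence "(v + e *\<^sub>R u) \<bullet> (A *v (v + e *\<^sub>R u)) \<le> m * ((v + e *\<^sub>R u) \<bullet> (v + e *\<^sub>R u))"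
      using max by blast
    moreover have "v \<bullet> (A *v u) = (A *v v) \<bullet> u" by (rule symmetric_inner_mult_vec[OF sym])
    ultimately show ?thesis
      using attained by (simp add: u_def inner_commute algebra_simps power2_eq_square)
  qed
  have "0 \<le> m * (u \<bullet> u) - u \<bullet> (A *v u)" using max u by simp
  hence "u \<bullet> u = 0" using perturb by (rule quadratic_nonneg_imp_linear_coeff_zero)
  thus ?thesis by (simp add: u_def)
qed

lemma symmetric_invariant_subspace_eigenbasis:
  fixes A :: "real^'n^'n"
  assumes sym: "transpose A = A" and "subspace S" "\<forall>v\<in>S. A *v v \<in> S"
  shows "\<exists>B. B \<subseteq> S \<and> S \<subseteq> span B \<and> pairwise orthogonal B \<and>
    (\<forall>b\<in>B. norm b = 1 \<and> (\<exists>l. A *v b = l *\<^sub>R b))"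
  using assms(2,3)
proof (induction "dim S" arbitrary: S rule: less_induct)
  case less
  note S = less.prems
  show ?case
  proof (cases "S \<subseteq> {0}")
    case True
    thus ?thesis by (intro exI[of _ "{}"]) auto
  next
    case False
    then obtain v where v: "v \<in> S" "norm v = 1"
      and max: "\<forall>w\<in>S. w \<bullet> (A *v w) \<le> (v \<bullet> (A *v v)) * (w \<bullet> w)"
      using quadratic_form_attains_max[OF S(1)] by blast
    have vv: "v \<bullet> v = 1" using v(2) by (simp add: norm_eq_1)
    have eig: "A *v v = (v \<bullet> (A *v v)) *\<^sub>R v"
      using quadratic_form_max_eigenvector[OF sym S v(1) max] vv by simp
    define S' where "S' = S \<inter> {w. v \<bullet> w = 0}"
    have S': "subspace S'"
      unfolding S'_def using subspace_inter[OF S(1) subspace_orthogonal_to_vector[of v]]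
      by (simp add: orthogonal_def)
    have invariant': "\<forall>w\<in>S'. A *v w \<in> S'"
    proof
      fix w assume w: "w \<in> S'"
      have "v \<bullet> (A *v w) = (A *v v) \<bullet> w" by (rule symmetric_inner_mult_vec[OF sym])
      also have "\<dots> = 0" using w by (subst eig) (simp add: S'_def)
      finally show "A *v w \<in> S'" using w S(2) by (simp add: S'_def)
    qed
    have "dim S' < dim S"
    proof (rule dim_psubset)
      have "v \<notin> S'" using vv by (simp add: S'_def)
      hence "S' \<subset> S" using v(1) unfolding S'_def by blast
      thus "span S' \<subset> span S" using S(1) S' by (simp add: span_eq_iff[THEN iffD2])
    qed
    then obtain B' where B': "B' \<subseteq> S'" "S' \<subseteq> span B'" "pairwise orthogonal B'"
      "\<forall>b\<in>B'. norm b = 1 \<and> (\<exists>l. A *v b = l *\<^sub>R b)"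
      using less.hyps[OF _ S' invariant'] by blast
    show ?thesis
    proof (intro exI[of _ "insert v B'"] conjI)
      show "insert v B' \<subseteq> S" using v(1) B'(1) by (auto simp: S'_def)
      show "pairwise orthogonal (insert v B')"
        using B'(1,3) by (auto simp: pairwise_insert S'_def orthogonal_def inner_commute)
      show "\<forall>b\<in>insert v B'. norm b = 1 \<and> (\<exists>l. A *v b = l *\<^sub>R b)"
        using B'(4) v(2) eig by blast
      show "S \<subseteq> span (insert v B')"
      proof
        fix w assume w: "w \<in> S"
        have "w - (v \<bullet> w) *\<^sub>R v \<in> S'"
          using w v(1) S(1) vv by (simp add: S'_def subspace_diff subspace_scale inner_diff_right)
        hence "w - (v \<bullet> w) *\<^sub>R v \<in> span (insert v B')"
          using B'(2) span_mono[of B' "insert v B'"] by blast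
        hence "(w - (v \<bullet> w) *\<^sub>R v) + (v \<bullet> w) *\<^sub>R v \<in> span (insert v B')"
          by (rule span_add) (simp add: span_base span_mul)
        thus "w \<in> span (insert v B')" by simp
      qed
    qed
  qed
qed

lemma symmetric_orthonormal_eigenbasis:
  fixes A :: "real^'n^'n"
  assumes "transpose A = A"
  shows "\<exists>x lam. orthonormal_fam x \<and> (\<forall>i. A *v x i = lam i *\<^sub>R x i)"
proof -
  obtain B where B: "UNIV \<subseteq> span B" "pairwise orthogonal B"
      "\<forall>b\<in>B. norm b = 1 \<and> (\<exists>l. A *v b = l *\<^sub>R b)"
    using symmetric_invariant_subspace_eigenbasis[OF assms, of UNIV] by auto
  have "independent B"
    using B by (intro pairwise_orthogonal_independent) auto
  hence "finite B" "card B = CARD('n)"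
    using basis_card_eq_dim[of B UNIV] B(1) finiteI_independent by auto
  then obtain x where x: "bij_betw x (UNIV :: 'n set) B"
    using finite_same_card_bij[of "UNIV :: 'n set" B] by auto
  have "orthonormal_fam x"
    unfolding orthonormal_fam_def
  proof (intro allI)
    fix i j
    show "x i \<bullet> x j = (if i = j then 1 else 0)"
    proof (cases "i = j")
      case True
      thus ?thesis using B(3) x by (auto simp: bij_betw_def norm_eq_1)
    next
      case False
      hence "x i \<noteq> x j" using x by (auto simp: bij_betw_def inj_def)
      thus ?thesis using False B(2) x by (auto simp: bij_betw_def pairwise_def orthogonal_def)
    qed
  qed
  moreover have "\<forall>i. \<exists>l. A *v x i = l *\<^sub>R x i"
    using B(3) x by (auto simp: bij_betw_def)
  ultimately show ?thesis by metis
qed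

lemma psd_eigendecomp_exists:
  fixes A :: "real^'n^'n"
  assumes "psd_mat A"
  shows "\<exists>lam x. psd_eigendecomp A lam x"
proof -
  have sym: "transpose A = A" and pos: "\<And>v. 0 \<le> v \<bullet> (A *v v)"
    using assms by (auto simp: psd_mat_def symmetric_mat_def)
  obtain x lam where x: "orthonormal_fam x" and eig: "\<And>i. A *v x i = lam i *\<^sub>R x i"
    using symmetric_orthonormal_eigenbasis[OF sym] by blast
  have "0 \<le> lam i" for i
    using pos[of "x i"] by (simp add: eig orthonormal_famD[OF x])
  moreover have "A *v v = spectral_mat x lam *v v" for v
  proof -
    have "A *v v = A *v (\<Sum>i\<in>UNIV. (x i \<bullet> v) *\<^sub>R x i)"
      using orthonormal_fam_expansion[OF x] by metis
    also have "\<dots> = (\<Sum>i\<in>UNIV. (lam i * (x i \<bullet> v)) *\<^sub>R x i)"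
      by (simp add: linear_sum[OF matrix_vector_mul_linear] matrix_vector_mult_scaleR eig mult.commute)
    finally show ?thesis by (simp add: spectral_mat_mult_vec)
  qed
  ultimately show ?thesis
    using x by (auto simp: psd_eigendecomp_iff matrix_eq)
qed

lemma mat_rpow_spectral_mat:
  assumes "psd_mat A"
  obtains lam x where "psd_eigendecomp A lam x" "mat_rpow A t = spectral_mat x (\<lambda>i. lam i powr t)"
proof -
  have "\<exists>B lam x. psd_eigendecomp A lam x \<and> B = spectral_mat x (\<lambda>i. lam i powr t)"
    using psd_eigendecomp_exists[OF assms] by blast
  from someI_ex[OF this] show ?thesis
    using that unfolding mat_rpow_def spectral_mat_def by blast
qed

section \<open>Entrywise nonnegativity of powers\<close>

lemma nonneg_mat_mult: "nonneg_mat A \<Longrightarrow> nonneg_mat B \<Longrightarrow> nonneg_mat (A ** B)"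
  by (auto simp: nonneg_mat_def matrix_matrix_mult_def intro!: sum_nonneg)

lemma psd_mat_diag_nonneg:
  assumes "psd_mat A"
  shows "0 \<le> A $ i $ i"
  using assms[unfolded psd_mat_def, THEN conjunct2, rule_format, of "axis i 1"]
  by (simp add: inner_axis' matrix_vector_mult_basis column_def)

lemma nonneg_spectral_mat_power:
  assumes "orthonormal_fam x" "nonneg_mat (spectral_mat x f)"
  shows "nonneg_mat (spectral_mat x (\<lambda>i. f i ^ k))"
proof (induction k)
  case 0
  thus ?case by (simp add: spectral_mat_one[OF assms(1)] nonneg_mat_def mat_def)
next
  case (Suc k)
  have "spectral_mat x (\<lambda>i. f i ^ Suc k) = spectral_mat x f ** spectral_mat x (\<lambda>i. f i ^ k)"
    by (simp add: spectral_mat_mult[OF assms(1)])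
  thus ?case using nonneg_mat_mult[OF assms(2) Suc.IH] by simp
qed

lemma nonneg_spectral_mat_powr:
  assumes x: "orthonormal_fam x" and f: "\<And>i. 0 \<le> f i" "card (range f) \<le> 3"
    and nonneg: "nonneg_mat (spectral_mat x f)" and s: "1 \<le> s" "s \<le> 2"
  shows "nonneg_mat (spectral_mat x (\<lambda>i. f i powr s))"
proof -
  obtain g \<beta> \<delta> where coeffs: "0 \<le> \<beta>" "0 \<le> \<delta>"
    and interp: "\<forall>e\<in>range f. e powr s = g + \<beta> * e + \<delta> * e\<^sup>2"
    using powr_quadratic_interpolation_card_le_3[of "range f" s] f s by auto
  let ?M = "spectral_mat x f"
  have "spectral_mat x (\<lambda>i. f i powr s) = spectral_mat x (\<lambda>i. g + \<beta> * f i + \<delta> * (f i * f i))"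
    using interp by (simp add: power2_eq_square)
  also have "\<dots> = g *\<^sub>R mat 1 + \<beta> *\<^sub>R ?M + \<delta> *\<^sub>R (?M ** ?M)"
    by (simp only: spectral_mat_affine spectral_mat_one[OF x] spectral_mat_mult[OF x])
  finally have M: "spectral_mat x (\<lambda>i. f i powr s) = g *\<^sub>R mat 1 + \<beta> *\<^sub>R ?M + \<delta> *\<^sub>R (?M ** ?M)" .
  show ?thesis
    unfolding nonneg_mat_def
  proof (intro allI)
    fix a b
    show "0 \<le> spectral_mat x (\<lambda>i. f i powr s) $ a $ b"
    proof (cases "a = b")
      case True
      thus ?thesis by (simp add: psd_mat_diag_nonneg psd_spectral_mat)
    next
      case False
      thus ?thesis
        using coeffs nonneg nonneg_mat_mult[OF nonneg nonneg]
        by (simp add: M mat_def nonneg_mat_def)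
    qed
  qed
qed

lemma powr_nat_add:
  fixes y s :: real
  assumes "0 \<le> y" "0 < s"
  shows "y powr (real k + s) = y ^ k * y powr s"
  using assms by (cases "y = 0") (simp_all add: powr_add powr_realpow)

lemma nat_add_Icc_1_2:
  fixes t :: real
  assumes "1 \<le> t"
  obtains k :: nat and s where "t = real k + s" "1 \<le> s" "s \<le> 2"
proof
  show "t = real (nat \<lfloor>t\<rfloor> - 1) + (t - real (nat \<lfloor>t\<rfloor> - 1))" by simp
  show "1 \<le> t - real (nat \<lfloor>t\<rfloor> - 1)" "t - real (nat \<lfloor>t\<rfloor> - 1) \<le> 2"
    using assms by linarith+
qed

theorem theorem5p3:
  fixes A :: "real^'n^'n"
  assumes "doubly_nonnegative A"
    and "card (eigenvalues_of A) \<le> 3"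
    and "(t::real) \<ge> 1"
  shows "doubly_nonnegative (mat_rpow A t)"
proof -
  have psd: "psd_mat A" and nonneg: "nonneg_mat A"
    using assms(1) by (auto simp: doubly_nonnegative_def)
  obtain lam x where "psd_eigendecomp A lam x" and rpow: "mat_rpow A t = spectral_mat x (\<lambda>i. lam i powr t)"
    using mat_rpow_spectral_mat[OF psd] .
  hence x: "orthonormal_fam x" and lam: "\<And>i. 0 \<le> lam i" and A: "A = spectral_mat x lam"
    by (auto simp: psd_eigendecomp_iff)
  have card: "card (range lam) \<le> 3"
    using assms(2) by (simp add: A eigenvalues_of_spectral_mat[OF x])
  obtain k s where t: "t = real k + s" and s: "1 \<le> s" "s \<le> 2"
    using nat_add_Icc_1_2[OF assms(3)] .
  have "lam i powr t = lam i ^ k * lam i powr s" for i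
    using lam s by (simp add: t powr_nat_add)
  hence "mat_rpow A t = spectral_mat x (\<lambda>i. lam i ^ k) ** spectral_mat x (\<lambda>i. lam i powr s)"
    by (simp add: rpow spectral_mat_mult[OF x])
  moreover have "nonneg_mat (spectral_mat x lam)" using nonneg A by simp
  ultimately have "nonneg_mat (mat_rpow A t)"
    using x lam card s by (simp add: nonneg_mat_mult nonneg_spectral_mat_power nonneg_spectral_mat_powr)
  moreover have "psd_mat (mat_rpow A t)"
    using lam by (simp add: rpow psd_spectral_mat)
  ultimately show ?thesis by (simp add: doubly_nonnegative_def psd_mat_def)
qed

end
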